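(* Let $r \ge 3$. There exist constants $\rho,\kappa>0$, $C,c>0$ and $t_0$, all depending only on $r$, such that the following holds for every integer $t\ge t_0$ and every integer $m$ with $\binom{t-1}{r} \le m \le \binom{t}{r}$. Let $G \subseteq \mathbb{N}^{(r)}$ and let $w$ be a weighting of $\mathbb{N}$ such that $|G| \le m$, $w(G) = \lambda(G) = \Lambda(m,r)$, and $w(x) > 0$ for every $x \in V(G)$. Then: (i) $w(x) \le C/t$ for every $x \in V(G)$; (ii) $|N(x)| \ge \rho t^{r-1}$ for every $x \in V(G)$; (iii) $|V(G)| \le \kappa t$; (iv) at least $ct$ vertices of $G$ have weight at least $c/t$.
   Context: An $r$-graph is a finite subset $G$ of $\mathbb{N}^{(r)}$ (the $r$-subsets of $\mathbb{N}$); $V(G)$ is the set of elements lying in some edge. A weighting of $\mathbb{N}$ is $w:\mathbb{N}\to[0,\infty)$ with $\sum_x w(x)=1$; $w(G)=\sum_{e\in G}\prod_{x\in e}w(x)$; the Lagrangian is $\lambda(G)=\max_w w(G)$. $\Lambda(m,r)=\max\{\lambda(G): G\subseteq\mathbb{N}^{(r)},\ |G|=m\}$. For $x\in V(G)$, $N(x)=\{e\setminus\{x\}: e\in G,\ x\in e\}$. *)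

theory Defs
  imports Complex_Main
begin

definition rgraph :: "nat \<Rightarrow> nat set set \<Rightarrow> bool" where
  "rgraph r G \<longleftrightarrow> finite G \<and> (\<forall>e\<in>G. finite e \<and> card e = r)"

definition vset :: "nat set set \<Rightarrow> nat set" where
  "vset G = \<Union>G"

definition nbhd :: "nat set set \<Rightarrow> nat \<Rightarrow> nat set set" where
  "nbhd G x = {e - {x} | e. e \<in> G \<and> x \<in> e}"

definition weighting :: "(nat \<Rightarrow> real) \<Rightarrow> bool" where
  "weighting w \<longleftrightarrow> (\<forall>x. 0 \<le> w x) \<and> w sums 1"

definition wval :: "(nat \<Rightarrow> real) \<Rightarrow> nat set set \<Rightarrow> real" where
  "wval w G = (\<Sum>e\<in>G. \<Prod>x\<in>e. w x)"

text \<open>Lagrangian: maximum of w(G) over weightings (the supremum, attained).\<close>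
definition lagr :: "nat set set \<Rightarrow> real" where
  "lagr G = Sup {wval w G | w. weighting w}"

definition Lam :: "nat \<Rightarrow> nat \<Rightarrow> real" where
  "Lam m r = Sup {lagr G | G. rgraph r G \<and> card G = m}"

end

theory Submission
  imports Defs
begin

text \<open>At an optimal weighting every vertex x of positive weight satisfies the first-order
  condition w(N(x)) \<ge> r \<lambda>(G), while Maclaurin's inequality gives
  (r-1)! w(N(x)) \<le> (1 - w(x))^(r-1). The uniform weighting of the complete r-graph on t-1
  vertices shows r! \<Lambda>(m,r) \<ge> 1 - r^2/(t-1), and together these squeeze w(x) \<le> 2r^2/t,
  which is (i). Then w(N(x)) \<le> |N(x)| (2r^2/t)^(r-1) gives (ii); the handshake identity
  \<Sum>|N(x)| = r|G| \<le> r t^r/r! gives (iii); and splitting w(G) into the edges that avoid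
  and the edges that meet the vertices of weight at least c/t gives (iv).\<close>

lemma weighting_nonneg: "weighting w \<Longrightarrow> 0 \<le> w x"
  unfolding weighting_def by auto

lemma weighting_sum_le_1:
  assumes "weighting w" "finite A"
  shows "sum w A \<le> 1"
proof -
  have "w sums 1" using assms(1) unfolding weighting_def by auto
  moreover have "sum w A \<le> suminf w"
    using calculation assms by (intro sum_le_suminf) (auto simp: sums_iff weighting_nonneg)
  ultimately show ?thesis using sums_unique by fastforce
qed

lemma weighting_le_1: "weighting w \<Longrightarrow> w x \<le> 1"
  using weighting_sum_le_1[of w "{x}"] by simp

lemma weighting_point: "weighting (\<lambda>y. if y = a then 1 else 0)"
  unfolding weighting_def using sums_single[of a "\<lambda>_. 1::real"] by auto

lemma weighting_uniform:
  assumes "finite A" "A \<noteq> {}"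
  shows "weighting (\<lambda>y. if y \<in> A then 1 / card A else 0)"
  using sums_If_finite_set[OF assms(1), of "\<lambda>_. 1 / real (card A)"] assms
  unfolding weighting_def by auto

lemma weighting_remove_mass:
  assumes w: "weighting w" and e: "0 < e" "e < 1" "e \<le> w x"
  shows "weighting (\<lambda>y. (w(x := w x - e)) y / (1 - e))"
proof -
  have "w sums 1" using w unfolding weighting_def by auto
  then have "(\<lambda>y. w y - (if y = x then e else 0)) sums (1 - e)"
    by (intro sums_diff) (use sums_single[of x "\<lambda>_. e"] in auto)
  moreover have "(\<lambda>y. w y - (if y = x then e else 0)) = w(x := w x - e)"
    by auto
  ultimately have "(\<lambda>y. (w(x := w x - e)) y / (1 - e)) sums ((1 - e) / (1 - e))"
    by (metis sums_divide)
  then show ?thesis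
    using e weighting_nonneg[OF w] unfolding weighting_def by auto
qed

lemma rgraph_nbhd: "rgraph r G \<Longrightarrow> rgraph (r - 1) (nbhd G x)"
  unfolding rgraph_def nbhd_def by auto

lemma vset_nbhd: "vset (nbhd G x) \<subseteq> vset G - {x}"
  unfolding vset_def nbhd_def by auto

lemma wval_nonneg: "(\<And>y. y \<in> vset G \<Longrightarrow> 0 \<le> w y) \<Longrightarrow> 0 \<le> wval w G"
  unfolding wval_def vset_def by (intro sum_nonneg prod_nonneg) auto

lemma wval_le_card_mult_power:
  fixes a :: real
  assumes "rgraph s F" "\<And>y. y \<in> vset F \<Longrightarrow> 0 \<le> w y \<and> w y \<le> a"
  shows "wval w F \<le> card F * a ^ s"
proof -
  have "(\<Prod>y\<in>f. w y) \<le> a ^ s" if "f \<in> F" for f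
    using prod_mono[of f w "\<lambda>_. a"] assms that unfolding rgraph_def vset_def by auto
  then show ?thesis
    unfolding wval_def using sum_mono[of F "\<lambda>f. \<Prod>y\<in>f. w y" "\<lambda>_. a ^ s"] by simp
qed

lemma wval_le_card: "weighting w \<Longrightarrow> rgraph r G \<Longrightarrow> wval w G \<le> card G"
  using wval_le_card_mult_power[of r G w 1] weighting_nonneg weighting_le_1 by auto

lemma wval_le_lagr: "weighting w \<Longrightarrow> rgraph r G \<Longrightarrow> wval w G \<le> lagr G"
  unfolding lagr_def by (rule cSup_upper) (auto intro!: bdd_aboveI wval_le_card)

lemma lagr_le_card: "rgraph r G \<Longrightarrow> lagr G \<le> card G"
  unfolding lagr_def using weighting_point by (intro cSup_least) (auto intro: wval_le_card)

lemma lagr_le_Lam: "rgraph r G \<Longrightarrow> lagr G \<le> Lam (card G) r"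
  unfolding Lam_def
  by (rule cSup_upper) (auto intro!: bdd_aboveI[of _ "real (card G)"] dest: lagr_le_card)

lemma nbhd_eq_image: "nbhd G x = (\<lambda>e. e - {x}) ` {e\<in>G. x \<in> e}"
  unfolding nbhd_def by auto

lemma inj_on_Diff_singleton: "inj_on (\<lambda>e. e - {x}) {e. x \<in> e}"
  by (rule inj_onI) (metis insert_Diff mem_Collect_eq)

lemma wval_nbhd: "wval w (nbhd G x) = (\<Sum>e\<in>{e\<in>G. x \<in> e}. \<Prod>y\<in>e - {x}. w y)"
  unfolding wval_def nbhd_eq_image
  by (subst sum.reindex) (auto intro: inj_on_subset[OF inj_on_Diff_singleton])

lemma weight_mult_wval_nbhd:
  fixes w :: "nat \<Rightarrow> real"
  assumes "rgraph r G"
  shows "w x * wval w (nbhd G x) = (\<Sum>e\<in>{e\<in>G. x \<in> e}. \<Prod>y\<in>e. w y)"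
  unfolding wval_nbhd sum_distrib_left
  using assms unfolding rgraph_def by (intro sum.cong) (auto simp: prod.remove)

lemma sum_weight_mult_wval_nbhd:
  fixes w :: "nat \<Rightarrow> real"
  assumes "rgraph r G" "finite H"
  shows "(\<Sum>x\<in>H. w x * wval w (nbhd G x)) = (\<Sum>e\<in>G. card (e \<inter> H) * (\<Prod>y\<in>e. w y))"
proof -
  have "(\<Sum>x\<in>H. w x * wval w (nbhd G x)) = (\<Sum>x\<in>H. \<Sum>e\<in>{e\<in>G. x \<in> e}. \<Prod>y\<in>e. w y)"
    using weight_mult_wval_nbhd[OF assms(1)] by simp
  also have "\<dots> = (\<Sum>e\<in>G. \<Sum>x\<in>{x\<in>H. x \<in> e}. \<Prod>y\<in>e. w y)"
    using assms unfolding rgraph_def by (intro sum.swap_restrict) auto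
  also have "\<dots> = (\<Sum>e\<in>G. card (e \<inter> H) * (\<Prod>y\<in>e. w y))"
    by (intro sum.cong) (auto simp: Int_def conj_commute)
  finally show ?thesis .
qed

lemma sum_vset_weight_mult_wval_nbhd:
  fixes w :: "nat \<Rightarrow> real"
  assumes "rgraph r G"
  shows "(\<Sum>x\<in>vset G. w x * wval w (nbhd G x)) = r * wval w G"
proof -
  have fin: "finite (vset G)" and "\<And>e. e \<in> G \<Longrightarrow> e \<inter> vset G = e \<and> card e = r"
    using assms unfolding rgraph_def vset_def by auto
  then have "(\<Sum>e\<in>G. card (e \<inter> vset G) * (\<Prod>y\<in>e. w y)) = r * wval w G"
    unfolding wval_def sum_distrib_left by simp
  then show ?thesis
    using sum_weight_mult_wval_nbhd[OF assms fin] by simp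
qed

lemma wval_const_1: "wval (\<lambda>_. 1) G = card G"
  unfolding wval_def by simp

lemma sum_card_nbhd: "rgraph r G \<Longrightarrow> (\<Sum>x\<in>vset G. real (card (nbhd G x))) = r * card G"
  using sum_vset_weight_mult_wval_nbhd[of r G "\<lambda>_. 1"] by (simp add: wval_const_1)

lemma wval_fun_upd:
  assumes "rgraph r G"
  shows "wval (w(x := a)) G = wval w G + (a - w x) * wval w (nbhd G x)"
proof -
  have "(\<Prod>y\<in>e. (w(x := a)) y)
      = (\<Prod>y\<in>e. w y) + (if x \<in> e then (a - w x) * (\<Prod>y\<in>e - {x}. w y) else 0)"
    if "e \<in> G" for e
  proof (cases "x \<in> e")
    case True
    then show ?thesis
      using assms that unfolding rgraph_def by (auto simp: prod.remove algebra_simps)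
  next
    case False
    then show ?thesis by (auto intro: prod.cong)
  qed
  then have "wval (w(x := a)) G
      = wval w G + (\<Sum>e\<in>G. if x \<in> e then (a - w x) * (\<Prod>y\<in>e - {x}. w y) else 0)"
    unfolding wval_def by (simp add: sum.distrib)
  also have "(\<Sum>e\<in>G. if x \<in> e then (a - w x) * (\<Prod>y\<in>e - {x}. w y) else 0)
      = (a - w x) * wval w (nbhd G x)"
    using assms unfolding rgraph_def wval_nbhd sum_distrib_left by (simp add: sum.inter_filter)
  finally show ?thesis .
qed

lemma wval_divide: "rgraph r G \<Longrightarrow> wval (\<lambda>y. w y / c) G = wval w G / c ^ r"
  unfolding wval_def rgraph_def by (simp add: prod_dividef sum_divide_distrib)

lemma fact_mult_wval_le_power_sum:
  fixes w :: "nat \<Rightarrow> real"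
  assumes "rgraph s F" "finite V" "vset F \<subseteq> V" "\<And>y. y \<in> V \<Longrightarrow> 0 \<le> w y"
  shows "fact s * wval w F \<le> (sum w V) ^ s"
  using assms(1,3)
proof (induction s arbitrary: F)
  case 0
  then have "F \<subseteq> {{}}"
    unfolding rgraph_def by auto
  then have "card F \<le> 1"
    using card_mono[of "{{}}" F] by simp
  moreover have "wval w F = card F"
    using \<open>F \<subseteq> {{}}\<close> unfolding wval_def by (auto simp: subset_singleton_iff)
  ultimately show ?case by simp
next
  case (Suc s F)
  have nbhd: "fact s * wval w (nbhd F x) \<le> (sum w V) ^ s" for x
    using Suc.prems vset_nbhd[of F x] rgraph_nbhd[OF Suc.prems(1), of x]
    by (intro Suc.IH) auto
  have "fact (Suc s) * wval w F = (\<Sum>x\<in>vset F. w x * (fact s * wval w (nbhd F x)))"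
    using sum_vset_weight_mult_wval_nbhd[OF Suc.prems(1), of w]
    by (simp add: sum_distrib_left[symmetric] algebra_simps)
  also have "\<dots> \<le> (\<Sum>x\<in>vset F. w x * (sum w V) ^ s)"
    using Suc.prems assms(4) nbhd by (intro sum_mono mult_left_mono) auto
  also have "\<dots> \<le> (\<Sum>x\<in>V. w x * (sum w V) ^ s)"
    using Suc.prems assms(2,4)
    by (intro sum_mono2) (auto intro!: mult_nonneg_nonneg zero_le_power sum_nonneg)
  also have "\<dots> = (sum w V) ^ Suc s"
    by (simp add: sum_distrib_right)
  finally show ?case .
qed

lemma fact_mult_wval_nbhd_le:
  assumes w: "weighting w" and G: "rgraph r G"
  shows "fact (r - 1) * wval w (nbhd G x) \<le> (1 - w x) ^ (r - 1)"
proof -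
  define V where "V = vset G - {x}"
  have V: "finite V" "x \<notin> V"
    using G unfolding V_def rgraph_def vset_def by auto
  have "sum w V \<le> 1 - w x"
    using weighting_sum_le_1[OF w, of "insert x V"] V by simp
  then have "(sum w V) ^ (r - 1) \<le> (1 - w x) ^ (r - 1)"
    using weighting_nonneg[OF w] by (intro power_mono sum_nonneg) auto
  moreover have "fact (r - 1) * wval w (nbhd G x) \<le> (sum w V) ^ (r - 1)"
    using V vset_nbhd[of G x] weighting_nonneg[OF w]
    by (intro fact_mult_wval_le_power_sum rgraph_nbhd G) (auto simp: V_def)
  ultimately show ?thesis
    by linarith
qed

lemma one_minus_power_le:
  fixes e :: real
  assumes "0 \<le> e" "e \<le> 1"
  shows "(1 - e) ^ r \<le> 1 - r * e + (real r)^2 * e^2"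
proof (induction r)
  case 0
  then show ?case by simp
next
  case (Suc r)
  have "(1 - e) ^ Suc r \<le> (1 - e) * (1 - r * e + (real r)^2 * e^2)"
    using Suc assms by (simp add: mult_left_mono)
  also have "\<dots> \<le> 1 - Suc r * e + (real (Suc r))^2 * e^2"
  proof -
    have "0 \<le> (real r)^2 * e^3" "0 \<le> (real r + 1) * e^2"
      using assms by simp_all
    then show ?thesis
      by (simp add: algebra_simps power2_eq_square power3_eq_cube)
  qed
  finally show ?case .
qed

text \<open>Moving mass e from x to the other vertices and rescaling changes w(G) by
  e (r w(G) - w(N(x))) + O(e^2), so at an optimum w(N(x)) \<ge> r \<lambda>(G).\<close>

lemma optimal_weighting_le_wval_nbhd:
  assumes w: "weighting w" and G: "rgraph r G" and opt: "wval w G = lagr G" and x: "0 < w x"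
  shows "r * lagr G \<le> wval w (nbhd G x)"
proof (rule ccontr)
  define L where "L = lagr G"
  define D where "D = wval w (nbhd G x)"
  assume "\<not> r * lagr G \<le> wval w (nbhd G x)"
  then have gap: "0 < r * L - D"
    unfolding L_def D_def by simp
  have D: "0 \<le> D"
    unfolding D_def using weighting_nonneg[OF w] by (intro wval_nonneg)
  then have "0 < r * L"
    using gap by linarith
  moreover have "0 \<le> L"
    unfolding L_def opt[symmetric] using weighting_nonneg[OF w] by (intro wval_nonneg)
  ultimately have L: "0 < L" and r: "0 < real r"
    by (auto simp: zero_less_mult_iff)
  \<comment> \<open>small enough for the O(e^2) term to eat at most half of the first-order gain\<close>
  define e where "e = min (w x / 2) ((r * L - D) / (2 * L * (real r)^2))"
  have e: "0 < e" "e < 1" "e \<le> w x"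
    unfolding e_def using x weighting_le_1[OF w, of x] gap L r by auto
  have "(L - e * D) / (1 - e) ^ r \<le> L"
    using wval_le_lagr[OF weighting_remove_mass[OF w e] G] opt e
    unfolding wval_divide[OF G] wval_fun_upd[OF G] L_def D_def by simp
  then have "L - e * D \<le> L * (1 - e) ^ r"
    using e by (simp add: divide_le_eq)
  also have "\<dots> \<le> L * (1 - r * e + (real r)^2 * e^2)"
    using one_minus_power_le[of e r] e L by (intro mult_left_mono) auto
  finally have "e * (r * L - D) \<le> e * (L * (real r)^2 * e)"
    by (simp add: algebra_simps power2_eq_square)
  then have "r * L - D \<le> L * (real r)^2 * e"
    using e by simp
  also have "\<dots> \<le> (r * L - D) / 2"
    using L r unfolding e_def by (simp add: field_simps min_def)
  finally show False
    using gap by (simp add: mult.commute)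
qed

lemma wval_le_light_plus_heavy:
  fixes w :: "nat \<Rightarrow> real" and b :: real
  assumes G: "rgraph r G" and w: "\<And>y. y \<in> vset G \<Longrightarrow> 0 \<le> w y" and b: "0 \<le> b"
  shows "wval w G \<le> card G * b ^ r + (\<Sum>x\<in>{x\<in>vset G. b \<le> w x}. w x * wval w (nbhd G x))"
proof -
  define H where "H = {x\<in>vset G. b \<le> w x}"
  have fin: "finite H"
    using G unfolding H_def rgraph_def vset_def by auto
  have "(\<Prod>y\<in>e. w y) \<le> b ^ r + card (e \<inter> H) * (\<Prod>y\<in>e. w y)" if e: "e \<in> G" for e
  proof -
    have e_vset: "e \<subseteq> vset G" and card_e: "finite e" "card e = r"
      using e G unfolding vset_def rgraph_def by auto
    then have prod: "0 \<le> (\<Prod>y\<in>e. w y)"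
      using w by (auto intro: prod_nonneg)
    show ?thesis
    proof (cases "e \<inter> H = {}")
      case True
      then have "\<forall>y\<in>e. 0 \<le> w y \<and> w y \<le> b"
        using e_vset w unfolding H_def by fastforce
      then show ?thesis
        using prod_mono[of e w "\<lambda>_. b"] True card_e by simp
    next
      case False
      then have "1 \<le> card (e \<inter> H)"
        using card_e by (simp add: Suc_le_eq card_gt_0_iff)
      moreover have "0 \<le> b ^ r"
        using b by simp
      ultimately show ?thesis
        using prod mult_right_mono[of 1 "real (card (e \<inter> H))" "\<Prod>y\<in>e. w y"] by simp
    qed
  qed
  then have "wval w G \<le> (\<Sum>e\<in>G. b ^ r + card (e \<inter> H) * (\<Prod>y\<in>e. w y))"
    unfolding wval_def by (rule sum_mono)
  also have "\<dots> = card G * b ^ r + (\<Sum>x\<in>H. w x * wval w (nbhd G x))"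
    by (simp add: sum.distrib sum_weight_mult_wval_nbhd[OF G fin])
  finally show ?thesis
    unfolding H_def .
qed

lemma fact_mult_binomial_ge:
  assumes "0 < n" "r \<le> n"
  shows "real n ^ r * (1 - (real r)^2 / n) \<le> fact r * real (n choose r)"
  using assms(2)
proof (induction r)
  case 0
  then show ?case by simp
next
  case (Suc r)
  have "(1 - (real (Suc r))^2 / n) \<le> (1 - (real r)^2 / n) * (1 - real r / n)"
  proof -
    have "0 \<le> ((real r)^2 / n) * (real r / n)"
      by simp
    moreover have "(real r)^2 / n + real r / n \<le> (real (Suc r))^2 / n"
      using assms by (simp add: divide_simps power2_eq_square algebra_simps)
    moreover have "(1 - (real r)^2 / n) * (1 - real r / n)
        = 1 - ((real r)^2 / n + real r / n) + ((real r)^2 / n) * (real r / n)"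
      by (simp only: left_diff_distrib right_diff_distrib)
    ultimately show ?thesis
      by linarith
  qed
  then have "real n ^ Suc r * (1 - (real (Suc r))^2 / n)
      \<le> real n ^ Suc r * ((1 - (real r)^2 / n) * (1 - real r / n))"
    by (intro mult_left_mono) auto
  also have "\<dots> = real n ^ r * (1 - (real r)^2 / n) * (real n - real r)"
    using assms by (simp add: field_simps)
  also have "\<dots> \<le> fact r * real (n choose r) * (real n - real r)"
    using Suc by (intro mult_right_mono) auto
  also have "\<dots> = fact (Suc r) * real (n choose Suc r)"
  proof -
    have "Suc r * (n choose Suc r) = (n - r) * (n choose r)"
      by (metis binomial_absorption binomial_absorb_comp)
    then have "real (Suc r) * real (n choose Suc r) = (real n - real r) * real (n choose r)"
      using Suc.prems by (metis of_nat_diff of_nat_mult Suc_leD)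
    then show ?thesis
      by (simp add: algebra_simps flip: distrib_left)
  qed
  finally show ?case .
qed

lemma ex_rgraph_extending_complete:
  assumes "n choose r \<le> m" "m \<le> Suc n choose r"
  shows "\<exists>G. rgraph r G \<and> card G = m \<and> {e. e \<subseteq> {0..<n} \<and> card e = r} \<subseteq> G"
proof -
  define K where "K = {e. e \<subseteq> {0..<n} \<and> card e = r}"
  define E where "E = {e. e \<subseteq> {0..<Suc n} \<and> card e = r}"
  have KE: "K \<subseteq> E" and cK: "card K = n choose r" and cE: "card E = Suc n choose r"
    unfolding K_def E_def by (auto simp: n_subsets)
  have fE: "finite E"
    unfolding E_def by (rule finite_subset[of _ "Pow {0..<Suc n}"]) auto
  then have fK: "finite K"
    using KE finite_subset by blast
  have "m - card K \<le> card (E - K)"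
    using card_Diff_subset[OF fK KE] cK cE assms by simp
  then obtain T where T: "T \<subseteq> E - K" "card T = m - card K"
    by (rule obtain_subset_with_card_n)
  have fT: "finite T"
    using T fE finite_subset by blast
  have "card (K \<union> T) = m"
    using T fT fK cK assms by (subst card_Un_disjoint) auto
  moreover have "rgraph r (K \<union> T)"
    using T fT fK KE finite_subset[of _ "{0..<Suc n}"] unfolding rgraph_def E_def by auto
  ultimately show ?thesis
    unfolding K_def by blast
qed

lemma Lam_ge_complete:
  assumes n: "0 < n" and m: "n choose r \<le> m" "m \<le> Suc n choose r"
  shows "real (n choose r) / real n ^ r \<le> Lam m r"
proof -
  define K where "K = {e. e \<subseteq> {0..<n} \<and> card e = r}"
  obtain G where G: "rgraph r G" "card G = m" "K \<subseteq> G"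
    using ex_rgraph_extending_complete[OF m] unfolding K_def by blast
  define u where "u y = (if y \<in> {0..<n} then 1 / card {0..<n} else 0)" for y
  have u: "weighting u"
    unfolding u_def using n by (intro weighting_uniform) auto
  have "(\<Prod>y\<in>e. u y) = (\<Prod>y\<in>e. 1 / real n)" if "e \<in> K" for e
    using that unfolding K_def u_def by (intro prod.cong) auto
  then have "wval u K = (\<Sum>e\<in>K. (1 / real n) ^ r)"
    unfolding wval_def by (intro sum.cong) (auto simp: K_def)
  then have "real (n choose r) / real n ^ r = wval u K"
    unfolding K_def by (simp add: n_subsets power_divide)
  also have "\<dots> \<le> wval u G"
    unfolding wval_def using G u unfolding rgraph_def
    by (intro sum_mono2) (auto intro: prod_nonneg weighting_nonneg)
  also have "\<dots> \<le> Lam m r"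
    using wval_le_lagr[OF u G(1)] lagr_le_Lam[OF G(1)] G(2) by simp
  finally show ?thesis .
qed

lemma fact_mult_Lam_ge:
  assumes "0 < n" "r \<le> n" "n choose r \<le> m" "m \<le> Suc n choose r"
  shows "1 - (real r)^2 / n \<le> fact r * Lam m r"
proof -
  have "1 - (real r)^2 / n \<le> fact r * (real (n choose r) / real n ^ r)"
    using fact_mult_binomial_ge[OF assms(1,2)] assms(1) by (simp add: field_simps)
  also have "\<dots> \<le> fact r * Lam m r"
    using Lam_ge_complete[OF assms(1,3,4)] by (intro mult_left_mono) auto
  finally show ?thesis .
qed

lemma fact_mult_lagr_le_wval_nbhd:
  assumes "weighting w" "rgraph r G" "wval w G = lagr G" "0 < w x" "1 \<le> r"
  shows "fact r * lagr G \<le> fact (r - 1) * wval w (nbhd G x)"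
proof -
  have "fact r * lagr G = fact (r - 1) * (r * lagr G)"
    using assms(5) fact_reduce[of r, where 'a = real] by simp
  also have "\<dots> \<le> fact (r - 1) * wval w (nbhd G x)"
    using optimal_weighting_le_wval_nbhd[OF assms(1-4)] by (intro mult_left_mono) auto
  finally show ?thesis .
qed

locale extremal_weighting =
  fixes r t m :: nat and G :: "nat set set" and w :: "nat \<Rightarrow> real"
  assumes r_ge: "2 \<le> r" and t_ge: "2 * r^2 + 1 \<le> t"
    and m_bounds: "(t - 1) choose r \<le> m" "m \<le> t choose r"
    and G_rgraph: "rgraph r G" and G_card: "card G \<le> m"
    and w_weighting: "weighting w" and w_optimal: "wval w G = lagr G"
    and lagr_extremal: "lagr G = Lam m r"
    and w_pos: "\<forall>x\<in>vset G. 0 < w x"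
begin

lemma t_pos: "0 < real t"
  using t_ge by simp

lemma fact_mult_lagr_ge: "1 - 2 * (real r)^2 / t \<le> fact r * lagr G" "1 / 2 \<le> fact r * lagr G"
proof -
  define n where "n = t - 1"
  have n_ge: "2 * r^2 \<le> n" and "Suc n = t"
    using t_ge unfolding n_def by auto
  moreover have "r \<le> 2 * r^2"
    using le_square[of r] by (simp add: power2_eq_square)
  moreover have "real (2 * r^2) \<le> real n"
    using n_ge by (simp only: of_nat_le_iff)
  ultimately have n: "2 * (real r)^2 \<le> n" "0 < n" "r \<le> n" "Suc n = t"
    using r_ge by (simp, linarith, linarith, simp)
  have *: "1 - (real r)^2 / n \<le> fact r * lagr G"
    using fact_mult_Lam_ge[OF n(2,3)] m_bounds lagr_extremal unfolding n_def[symmetric] n(4) by simp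
  have "real t \<le> 2 * n"
    using n(2,4) by linarith
  then have "real t * (real r)^2 \<le> real n * (2 * (real r)^2)"
    using mult_right_mono[of "real t" "2 * n" "(real r)^2"] by simp
  then have "(real r)^2 / n \<le> 2 * (real r)^2 / t"
    using n t_pos by (simp add: field_simps)
  then show "1 - 2 * (real r)^2 / t \<le> fact r * lagr G"
    using * by linarith
  have "(real r)^2 / n \<le> 1 / 2"
    using n by (simp add: field_simps)
  then show "1 / 2 \<le> fact r * lagr G"
    using * by linarith
qed

lemma fact_mult_lagr_le_wval_nbhd':
  "x \<in> vset G \<Longrightarrow> fact r * lagr G \<le> fact (r - 1) * wval w (nbhd G x)"
  using fact_mult_lagr_le_wval_nbhd[OF w_weighting G_rgraph w_optimal] w_pos r_ge by auto

lemma fact_mult_card_le: "fact r * real (card G) \<le> real t ^ r"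
proof -
  have "card G * fact r \<le> t ^ r"
    using G_card m_bounds(2) binomial_fact_pow[of t r] by (meson le_trans mult_le_mono1)
  then have "real (card G * fact r) \<le> real (t ^ r)"
    by (simp only: of_nat_le_iff)
  then show ?thesis
    by (simp add: mult.commute)
qed

lemma weight_le: "x \<in> vset G \<Longrightarrow> w x \<le> 2 * (real r)^2 / t"
proof -
  assume x: "x \<in> vset G"
  have "fact r * lagr G \<le> (1 - w x) ^ (r - 1)"
    using fact_mult_lagr_le_wval_nbhd'[OF x] fact_mult_wval_nbhd_le[OF w_weighting G_rgraph]
    by (rule order.trans)
  also have "\<dots> \<le> (1 - w x) ^ 1"
    using r_ge weighting_nonneg[OF w_weighting] weighting_le_1[OF w_weighting]
    by (intro power_decreasing) auto
  finally show ?thesis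
    using fact_mult_lagr_ge(1) by simp
qed

lemma card_nbhd_ge:
  assumes x: "x \<in> vset G"
  shows "real t ^ (r - 1) \<le> 2 * fact (r - 1) * (2 * (real r)^2) ^ (r - 1) * card (nbhd G x)"
proof -
  have "wval w (nbhd G x) \<le> card (nbhd G x) * (2 * (real r)^2 / t) ^ (r - 1)"
    using vset_nbhd[of G x] weight_le weighting_nonneg[OF w_weighting]
    by (intro wval_le_card_mult_power[OF rgraph_nbhd[OF G_rgraph]]) auto
  then have "fact (r - 1) * wval w (nbhd G x)
      \<le> fact (r - 1) * (card (nbhd G x) * (2 * (real r)^2 / t) ^ (r - 1))"
    by (intro mult_left_mono) auto
  also have "\<dots> = fact (r - 1) * card (nbhd G x) * (2 * (real r)^2) ^ (r - 1) / real t ^ (r - 1)"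
    by (simp add: power_divide)
  finally have "1 / 2 \<le> fact (r - 1) * card (nbhd G x) * (2 * (real r)^2) ^ (r - 1) / real t ^ (r - 1)"
    using fact_mult_lagr_ge(2) fact_mult_lagr_le_wval_nbhd'[OF x] by linarith
  then show ?thesis
    using t_pos by (simp add: le_divide_eq mult_ac)
qed

lemma card_vset_le: "card (vset G) \<le> 2 * (2 * (real r)^2) ^ (r - 1) * t"
proof -
  define K where "K = 2 * (2 * (real r)^2) ^ (r - 1)"
  have "card (vset G) * real t ^ (r - 1) = (\<Sum>x\<in>vset G. real t ^ (r - 1))"
    by simp
  also have "\<dots> \<le> (\<Sum>x\<in>vset G. K * fact (r - 1) * card (nbhd G x))"
    using card_nbhd_ge unfolding K_def by (intro sum_mono) (simp add: algebra_simps)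
  also have "\<dots> = K * fact (r - 1) * (\<Sum>x\<in>vset G. real (card (nbhd G x)))"
    by (simp add: sum_distrib_left)
  also have "\<dots> = K * (fact (r - 1) * r * card G)"
    unfolding sum_card_nbhd[OF G_rgraph] by simp
  also have "\<dots> = K * (fact r * card G)"
    using r_ge fact_reduce[of r, where 'a = real] by (simp add: mult.commute)
  also have "\<dots> \<le> K * real t ^ r"
    using fact_mult_card_le unfolding K_def by (intro mult_left_mono) auto
  also have "\<dots> = K * t * real t ^ (r - 1)"
    using r_ge by (cases r) auto
  finally show ?thesis
    using t_pos unfolding K_def by (simp add: mult_le_cancel_right_pos)
qed

lemma card_heavy_ge:
  defines "c \<equiv> 1 / (2 + 4 * real r ^ 3)"
  shows "c * t \<le> card {x\<in>vset G. c / t \<le> w x}"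
proof -
  define H where "H = {x\<in>vset G. c / t \<le> w x}"
  define D where "D = 1 + 2 * real r ^ 3"
  have D: "1 \<le> D" and c_eq: "c = 1 / (2 * D)"
    unfolding D_def c_def by simp_all
  have c: "0 < c" "c \<le> 1" "c * D = 1 / 2"
    using D unfolding c_eq by auto
  have heavy: "w x * wval w (nbhd G x) \<le> 2 * (real r)^2 / t / fact (r - 1)" if "x \<in> H" for x
  proof -
    have "fact (r - 1) * wval w (nbhd G x) \<le> (1 - w x) ^ (r - 1)"
      by (rule fact_mult_wval_nbhd_le[OF w_weighting G_rgraph])
    also have "\<dots> \<le> 1"
      using weighting_nonneg[OF w_weighting] weighting_le_1[OF w_weighting] by (intro power_le_one) auto
    finally have "wval w (nbhd G x) \<le> 1 / fact (r - 1)"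
      by (simp add: field_simps)
    moreover have "w x \<le> 2 * (real r)^2 / t"
      using that weight_le unfolding H_def by simp
    ultimately have "w x * wval w (nbhd G x) \<le> 2 * (real r)^2 / t * (1 / fact (r - 1))"
      using weighting_nonneg[OF w_weighting] by (intro mult_mono wval_nonneg) auto
    then show ?thesis
      by simp
  qed
  have "lagr G \<le> card G * (c / t) ^ r + (\<Sum>x\<in>H. w x * wval w (nbhd G x))"
    using wval_le_light_plus_heavy[OF G_rgraph, of w "c / t"] w_optimal
      weighting_nonneg[OF w_weighting] c t_pos
    unfolding H_def by simp
  also have "\<dots> \<le> card G * (c / t) ^ r + card H * (2 * (real r)^2 / t / fact (r - 1))"
    using sum_mono[OF heavy] by simp
  finally have "fact r * lagr G
      \<le> fact r * (card G * (c / t) ^ r + card H * (2 * (real r)^2 / t / fact (r - 1)))"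
    by (rule mult_left_mono) simp
  also have "\<dots> = fact r * real (card G) * (c / t) ^ r
      + card H * (fact r * (2 * (real r)^2 / t / fact (r - 1)))"
    by (simp only: distrib_left mult.assoc mult.left_commute)
  also have "fact r * (2 * (real r)^2 / t / fact (r - 1)) = 2 * real r ^ 3 / t"
    using r_ge fact_reduce[of r, where 'a = real] by (simp add: power2_eq_square power3_eq_cube)
  also have "fact r * real (card G) * (c / t) ^ r \<le> real t ^ r * (c / t) ^ r"
    using fact_mult_card_le c by (intro mult_right_mono) auto
  also have "\<dots> = c ^ r"
    using t_pos by (simp add: power_divide)
  also have "\<dots> \<le> c"
    using power_decreasing[of 1 r c] c r_ge by simp
  finally have "c * (D - 1) \<le> card H * (2 * real r ^ 3 / t)"
    using fact_mult_lagr_ge(2) c(3) by (simp add: algebra_simps)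
  then show ?thesis
    using t_pos r_ge unfolding D_def H_def by (simp add: field_simps)
qed

end

theorem proposition4p4:
  fixes r :: nat
  assumes "r \<ge> 3"
  shows "\<exists>(\<rho>::real) (\<kappa>::real) (C::real) (c::real) (t0::nat).
    \<rho> > 0 \<and> \<kappa> > 0 \<and> C > 0 \<and> c > 0 \<and>
    (\<forall>t m G w. t \<ge> t0 \<and> (t - 1) choose r \<le> m \<and> m \<le> t choose r \<and>
       rgraph r G \<and> card G \<le> m \<and> weighting w \<and>
       wval w G = lagr G \<and> lagr G = Lam m r \<and>
       (\<forall>x\<in>vset G. w x > 0) \<longrightarrow>
         (\<forall>x\<in>vset G. w x \<le> C / real t) \<and>
         (\<forall>x\<in>vset G. real (card (nbhd G x)) \<ge> \<rho> * real t ^ (r - 1)) \<and>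
         real (card (vset G)) \<le> \<kappa> * real t \<and>
         real (card {x\<in>vset G. w x \<ge> c / real t}) \<ge> c * real t)"
proof -
  define C :: real where "C = 2 * (real r)^2"
  define \<rho> :: real where "\<rho> = 1 / (2 * fact (r - 1) * C ^ (r - 1))"
  define \<kappa> :: real where "\<kappa> = 2 * C ^ (r - 1)"
  define c :: real where "c = 1 / (2 + 4 * real r ^ 3)"
  have C: "C > 0"
    unfolding C_def using assms by simp
  show ?thesis
  proof (rule exI[of _ \<rho>], rule exI[of _ \<kappa>], rule exI[of _ C], rule exI[of _ c],
      rule exI[of _ "2 * r^2 + 1"], intro conjI allI impI)
    show "\<rho> > 0" "\<kappa> > 0" "C > 0" "c > 0"
      using C unfolding \<rho>_def \<kappa>_def c_def by (simp_all add: add_pos_nonneg)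
    fix t m G w
    assume "2 * r^2 + 1 \<le> t \<and> (t - 1) choose r \<le> m \<and> m \<le> t choose r \<and>
      rgraph r G \<and> card G \<le> m \<and> weighting w \<and>
      wval w G = lagr G \<and> lagr G = Lam m r \<and> (\<forall>x\<in>vset G. w x > 0)"
    then interpret extremal_weighting r t m G w
      using assms by unfold_locales auto
    show "\<forall>x\<in>vset G. w x \<le> C / real t"
      using weight_le unfolding C_def by simp
    show "\<forall>x\<in>vset G. \<rho> * real t ^ (r - 1) \<le> real (card (nbhd G x))"
      using card_nbhd_ge C unfolding \<rho>_def C_def[symmetric] by (simp add: divide_le_eq mult_ac)
    show "real (card (vset G)) \<le> \<kappa> * real t"
      using card_vset_le unfolding \<kappa>_def C_def .
    show "c * real t \<le> real (card {x\<in>vset G. c / real t \<le> w x})"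
      using card_heavy_ge unfolding c_def .
  qed
qed

end
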